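(* Let $G(\lambda)\in\mathbb F(\lambda)^{p\times m}$ and let $L(\lambda)=\begin{bmatrix} A_1\lambda+A_0 & B_1\lambda+B_0\\ -(C_1\lambda+C_0) & D_1\lambda+D_0\end{bmatrix}$, with $A_1\lambda+A_0$ of size $n\times n$, be a linearization of $G(\lambda)$ with transfer function matrix $\widehat G(\lambda)=(D_1\lambda+D_0)+(C_1\lambda+C_0)(A_1\lambda+A_0)^{-1}(B_1\lambda+B_0)\in\mathbb F(\lambda)^{(p+s)\times(m+s)}$. Let $U(\lambda)\in\mathbb F[\lambda]^{(p+s)\times(p+s)}$ and $V(\lambda)\in\mathbb F[\lambda]^{(m+s)\times(m+s)}$ be unimodular with $U(\lambda)\widehat G(\lambda)V(\lambda)=\operatorname{Diag}(G(\lambda),I_s)$. (a) $\begin{bmatrix}H_1(\lambda)\\H_2(\lambda)\end{bmatrix}$ (with $H_1$ having $n$ rows) is a right polynomial basis of $L(\lambda)$ if and only if $H_2(\lambda)=V(\lambda)\begin{bmatrix}H(\lambda)\\0\end{bmatrix}$ for some right polynomial basis $H(\lambda)$ of $G(\lambda)$ and $H_1(\lambda)=-(A_1\lambda+A_0)^{-1}(B_1\lambda+B_0)H_2(\lambda)$. (b) $\begin{bmatrix}H_1(\lambda)\\H_2(\lambda)\end{bmatrix}$ is a left polynomial basis of $L(\lambda)$ if and only if $H_2(\lambda)=U(\lambda)^T\begin{bmatrix}H(\lambda)\\0\end{bmatrix}$ for some left polynomial basis $H(\lambda)$ of $G(\lambda)$ and $H_1(\lambda)=((C_1\lambda+C_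0)(A_1\lambda+A_0)^{-1})^TH_2(\lambda)$.
   Context: $\mathbb F$ is an arbitrary field. A polynomial system matrix $\begin{bmatrix} A(\lambda) & B(\lambda)\\ -C(\lambda) & D(\lambda)\end{bmatrix}$ ($A$ square regular) has transfer function $D+CA^{-1}B$; it is minimal if $A,B$ are left coprime and $A,C$ right coprime (coprime meaning all common one-sided divisors are unimodular). A pencil $L(\lambda)$ as in the claim is a linearization of $G(\lambda)$ if it is a minimal polynomial system matrix of a rational matrix $\widehat G(\lambda)$ such that $\operatorname{Diag}(\widehat G(\lambda))$ and $\operatorname{Diag}(G(\lambda),I_s)$ are unimodularly equivalent for some $s\ge 0$. A right (left) polynomial basis of a rational matrix $G$ is a polynomial matrix whose columns form a basis of $\mathcal N_r(G)=\{x:Gx=0\}$ ($\mathcal N_\ell(G)=\{x:x^TG=0\}$). *)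

theory Defs
  imports "Jordan_Normal_Form.Gauss_Jordan_Elimination" "Jordan_Normal_Form.Determinant"
          "HOL-Computational_Algebra.Fraction_Field" "HOL-Computational_Algebra.Polynomial"
begin

text \<open>Matrices (polynomial or rational) are all represented as matrices over this field;
  a polynomial matrix is one whose entries are (embedded) polynomials.\<close>

type_synonym 'a rf = "'a poly fract"

definition poly_mat :: "'a::field rf mat \<Rightarrow> bool" where
  "poly_mat M \<longleftrightarrow> (\<forall>i < dim_row M. \<forall>j < dim_col M. \<exists>q. M $$ (i,j) = to_fract q)"

definition pencil :: "'a::field mat \<Rightarrow> 'a mat \<Rightarrow> 'a rf mat" where
  "pencil M1 M0 = mat (dim_row M0) (dim_col M0) (\<lambda>(i,j). to_fract [:M0 $$ (i,j), M1 $$ (i,j):])"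

definition unimodular :: "'a::field rf mat \<Rightarrow> bool" where
  "unimodular M \<longleftrightarrow> poly_mat M \<and> dim_row M = dim_col M \<and>
     (\<exists>W. poly_mat W \<and> W \<in> carrier_mat (dim_row M) (dim_row M) \<and>
          M * W = 1\<^sub>m (dim_row M) \<and> W * M = 1\<^sub>m (dim_row M))"

definition unimod_equiv :: "'a::field rf mat \<Rightarrow> 'a rf mat \<Rightarrow> bool" where
  "unimod_equiv P Q \<longleftrightarrow> (\<exists>X Y. unimodular X \<and> unimodular Y \<and>
      X \<in> carrier_mat (dim_row P) (dim_row P) \<and> Y \<in> carrier_mat (dim_col P) (dim_col P) \<and>
      X * P * Y = Q)"

definition minv :: "'a::field mat \<Rightarrow> 'a mat" where
  "minv A = the (mat_inverse A)"

definition left_coprime :: "'a::field rf mat \<Rightarrow> 'a rf mat \<Rightarrow> bool" where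
  "left_coprime A B \<longleftrightarrow> (\<forall>X A' B'. poly_mat X \<and> poly_mat A' \<and> poly_mat B' \<and>
      X \<in> carrier_mat (dim_row A) (dim_row A) \<and> A' \<in> carrier_mat (dim_row A) (dim_col A) \<and>
      B' \<in> carrier_mat (dim_row A) (dim_col B) \<and> A = X * A' \<and> B = X * B' \<longrightarrow> unimodular X)"

definition right_coprime :: "'a::field rf mat \<Rightarrow> 'a rf mat \<Rightarrow> bool" where
  "right_coprime A C \<longleftrightarrow> (\<forall>X A' C'. poly_mat X \<and> poly_mat A' \<and> poly_mat C' \<and>
      X \<in> carrier_mat (dim_col A) (dim_col A) \<and> A' \<in> carrier_mat (dim_row A) (dim_col A) \<and>
      C' \<in> carrier_mat (dim_row C) (dim_col A) \<and> A = A' * X \<and> C = C' * X \<longrightarrow> unimodular X)"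

definition transfer :: "'a::field rf mat \<Rightarrow> 'a rf mat \<Rightarrow> 'a rf mat \<Rightarrow> 'a rf mat \<Rightarrow> 'a rf mat" where
  "transfer A B C D = D + C * minv A * B"

definition minimal_psm :: "'a::field rf mat \<Rightarrow> 'a rf mat \<Rightarrow> 'a rf mat \<Rightarrow> 'a rf mat \<Rightarrow> bool" where
  "minimal_psm A B C D \<longleftrightarrow> poly_mat A \<and> poly_mat B \<and> poly_mat C \<and> poly_mat D \<and>
     dim_row A = dim_col A \<and> det A \<noteq> 0 \<and> left_coprime A B \<and> right_coprime A C"

definition diag2 :: "'a::zero mat \<Rightarrow> 'a mat \<Rightarrow> 'a mat" where
  "diag2 P Q = four_block_mat P (0\<^sub>m (dim_row P) (dim_col Q)) (0\<^sub>m (dim_row Q) (dim_col P)) Q"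

definition linearization ::
  "'a::field rf mat \<Rightarrow> 'a mat \<Rightarrow> 'a mat \<Rightarrow> 'a mat \<Rightarrow> 'a mat \<Rightarrow> 'a mat \<Rightarrow> 'a mat \<Rightarrow> 'a mat \<Rightarrow> 'a mat \<Rightarrow> bool" where
  "linearization G A1 A0 B1 B0 C1 C0 D1 D0 \<longleftrightarrow>
     minimal_psm (pencil A1 A0) (pencil B1 B0) (pencil C1 C0) (pencil D1 D0) \<and>
     (\<exists>s. unimod_equiv (transfer (pencil A1 A0) (pencil B1 B0) (pencil C1 C0) (pencil D1 D0))
                        (diag2 G (1\<^sub>m s)))"

definition right_poly_basis :: "'a::field rf mat \<Rightarrow> 'a rf mat \<Rightarrow> bool" where
  "right_poly_basis G H \<longleftrightarrow> poly_mat H \<and> dim_row H = dim_col G \<and>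
     G * H = 0\<^sub>m (dim_row G) (dim_col H) \<and>
     (\<forall>y \<in> carrier_vec (dim_col H). H *\<^sub>v y = 0\<^sub>v (dim_row H) \<longrightarrow> y = 0\<^sub>v (dim_col H)) \<and>
     (\<forall>x \<in> carrier_vec (dim_col G). G *\<^sub>v x = 0\<^sub>v (dim_row G) \<longrightarrow>
        (\<exists>y \<in> carrier_vec (dim_col H). x = H *\<^sub>v y))"

text \<open>Left null space {x. x^T G = 0} is the right null space of G^T.\<close>
definition left_poly_basis :: "'a::field rf mat \<Rightarrow> 'a rf mat \<Rightarrow> bool" where
  "left_poly_basis G H \<longleftrightarrow> right_poly_basis (transpose_mat G) H"

end

theory Submission
  imports Defs
begin

text \<open>Write the pencil as \<open>L = [A B; -C D]\<close>, put \<open>K = -A\<^sup>-\<^sup>1 B\<close> and let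
  \<open>T = D + C A\<^sup>-\<^sup>1 B\<close> be its transfer function. A vector \<open>[x1; x2]\<close> lies in the kernel of \<open>L\<close>
  iff \<open>x1 = K x2\<close> and \<open>T x2 = 0\<close>; since \<open>U T V = Diag(G, I)\<close> with \<open>U, V\<close> unimodular,
  \<open>T x2 = 0\<close> iff \<open>x2 = V [z; 0]\<close> with \<open>G z = 0\<close>. Each of these identifications of kernels is
  given by a polynomial matrix with a polynomial inverse on the kernel, except \<open>x2 \<mapsto> K x2\<close>: there
  the right coprimeness of \<open>A\<close> and \<open>C\<close> makes \<open>K x2\<close> polynomial whenever \<open>x2\<close> is, because
  \<open>A K x2 = -B x2\<close> and \<open>C K x2 = D x2\<close> are. Hence polynomial bases correspond. Left bases are
  right bases of the transposed pencil, which is again a minimal system matrix of the same shape,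
  since transposition exchanges left and right coprimeness.\<close>

(* col_mult2, i.e. col (A * B) j = A *v col B j, is the normal form used throughout. *)
declare col_mult [simp del]

lemma mult_mat_vec_zero [simp]: "A \<in> carrier_mat r c \<Longrightarrow> A *\<^sub>v 0\<^sub>v c = (0\<^sub>v r :: 'a::semiring_0 vec)"
  by (intro eq_vecI) auto

lemma zero_mult_mat_vec [simp]: "v \<in> carrier_vec c \<Longrightarrow> 0\<^sub>m r c *\<^sub>v v = (0\<^sub>v r :: 'a::semiring_0 vec)"
  by (intro eq_vecI) auto

lemma mult_mat_eq_0_iff_cols:
  fixes M :: "'a::semiring_0 mat"
  assumes M: "M \<in> carrier_mat r c" and H: "H \<in> carrier_mat c k"
  shows "M * H = 0\<^sub>m r k \<longleftrightarrow> (\<forall>j<k. M *\<^sub>v col H j = 0\<^sub>v r)"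
proof -
  have "M * H = 0\<^sub>m r k \<longleftrightarrow> (\<forall>j<k. col (M * H) j = col (0\<^sub>m r k) j)"
    using M H by (auto intro: mat_col_eqI simp del: col_mult2)
  also have "\<dots> \<longleftrightarrow> (\<forall>j<k. M *\<^sub>v col H j = 0\<^sub>v r)"
    using col_mult2[OF M H] by simp
  finally show ?thesis .
qed

lemma mult_mat_vec_unit_vec:
  fixes M :: "'a::semiring_1 mat"
  assumes "M \<in> carrier_mat k n" "i < n"
  shows "M *\<^sub>v unit_vec n i = col M i"
proof -
  from assms(1) have "dim_row M = k" "dim_col M = n"
    by auto
  with assms(2) show ?thesis
    by (intro eq_vecI) auto
qed

lemma add_vec_eq_0_iff:
  fixes v w :: "'a::ab_group_add vec"
  assumes "v \<in> carrier_vec n" "w \<in> carrier_vec n"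
  shows "v + w = 0\<^sub>v n \<longleftrightarrow> v = - w"
proof
  assume vw: "v + w = 0\<^sub>v n"
  show "v = - w"
  proof (rule eq_vecI)
    fix i assume "i < dim_vec (- w)"
    with assms arg_cong[OF vw, of "\<lambda>u. u $ i"] show "v $ i = (- w) $ i"
      by (simp add: eq_neg_iff_add_eq_0)
  qed (use assms in simp)
qed (use assms in \<open>auto intro!: eq_vecI\<close>)

lemma append_vec_eq_0_iff:
  assumes "v \<in> carrier_vec m" "w \<in> carrier_vec s"
  shows "v @\<^sub>v w = 0\<^sub>v (m + s) \<longleftrightarrow> v = 0\<^sub>v m \<and> w = (0\<^sub>v s :: 'a::zero vec)"
proof -
  have "0\<^sub>v (m + s) = (0\<^sub>v m @\<^sub>v 0\<^sub>v s :: 'a vec)"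
    by (intro eq_vecI) (simp_all add: append_vec_def)
  with assms show ?thesis
    by simp
qed

lemma col_append_rows:
  "X \<in> carrier_mat r1 c \<Longrightarrow> Y \<in> carrier_mat r2 c \<Longrightarrow> j < c \<Longrightarrow> col (X @\<^sub>r Y) j = col X j @\<^sub>v col Y j"
  unfolding append_rows_def by (rule col_four_block_mat(1)) auto

lemma append_rows_mult:
  assumes X: "X \<in> carrier_mat r1 c" and Y: "Y \<in> carrier_mat r2 c" and H: "H \<in> carrier_mat c k"
  shows "(X @\<^sub>r Y) * H = (X * H) @\<^sub>r (Y * H)"
proof (rule mat_col_eqI)
  fix j assume "j < dim_col ((X * H) @\<^sub>r (Y * H))"
  then have j: "j < k"
    using X Y H by (simp add: append_rows_def)
  have "col ((X @\<^sub>r Y) * H) j = (X *\<^sub>v col H j) @\<^sub>v (Y *\<^sub>v col H j)"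
    using col_mult2[OF carrier_append_rows[OF X Y] H j] mat_mult_append[OF X Y] H j by simp
  also have "\<dots> = col ((X * H) @\<^sub>r (Y * H)) j"
    using col_append_rows[of "X * H" r1 k "Y * H" r2 j] col_mult2[OF X H j] col_mult2[OF Y H j] X Y H j
    by simp
  finally show "col ((X @\<^sub>r Y) * H) j = col ((X * H) @\<^sub>r (Y * H)) j" .
qed (use X Y H in \<open>auto simp: append_rows_def\<close>)

lemma append_rows_eq_iff:
  assumes "X \<in> carrier_mat r1 c" "X' \<in> carrier_mat r1 c" "Y \<in> carrier_mat r2 c" "Y' \<in> carrier_mat r2 c"
  shows "X @\<^sub>r Y = X' @\<^sub>r Y' \<longleftrightarrow> X = X' \<and> Y = Y'"
proof
  assume eq: "X @\<^sub>r Y = X' @\<^sub>r Y'"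
  have "X $$ (i, j) = X' $$ (i, j)" if "i < r1" "j < c" for i j
    using that assms arg_cong[OF eq, of "\<lambda>M. M $$ (i, j)"] by (simp add: append_rows_def)
  moreover have "Y $$ (i, j) = Y' $$ (i, j)" if "i < r2" "j < c" for i j
    using that assms arg_cong[OF eq, of "\<lambda>M. M $$ (r1 + i, j)"] by (simp add: append_rows_def)
  ultimately show "X = X' \<and> Y = Y'"
    using assms by (auto intro!: eq_matI)
qed simp

definition select_mat :: "nat \<Rightarrow> nat \<Rightarrow> nat \<Rightarrow> 'a::zero_neq_one mat" where
  "select_mat r c d = mat r c (\<lambda>(i, j). of_bool (j = d + i))"

lemma select_mat_carrier [simp]:
  "select_mat r c d \<in> carrier_mat r c" "dim_row (select_mat r c d) = r" "dim_col (select_mat r c d) = c"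
  by (simp_all add: select_mat_def)

lemma select_mat_mult_vec:
  fixes v :: "'a::comm_ring_1 vec"
  assumes "v \<in> carrier_vec c" "d + r \<le> c"
  shows "select_mat r c d *\<^sub>v v = vec r (\<lambda>i. v $ (d + i))"
proof (rule eq_vecI)
  fix i assume "i < dim_vec (vec r (\<lambda>i. v $ (d + i)))"
  then have i: "i < r"
    by simp
  have "(select_mat r c d *\<^sub>v v) $ i = row (select_mat r c d) i \<bullet> v"
    using i by (intro index_mult_mat_vec) simp
  also have "row (select_mat r c d) i = unit_vec c (d + i)"
    using i assms(2) by (intro eq_vecI) (auto simp: select_mat_def)
  also have "unit_vec c (d + i) \<bullet> v = vec r (\<lambda>i. v $ (d + i)) $ i"
    using i assms by simp
  finally show "(select_mat r c d *\<^sub>v v) $ i = vec r (\<lambda>i. v $ (d + i)) $ i" .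
qed simp

lemma select_mat_append:
  fixes v w :: "'a::comm_ring_1 vec"
  assumes "v \<in> carrier_vec m" "w \<in> carrier_vec s"
  shows "select_mat m (m + s) 0 *\<^sub>v (v @\<^sub>v w) = v" "select_mat s (m + s) m *\<^sub>v (v @\<^sub>v w) = w"
  using assms by (auto simp: select_mat_mult_vec intro!: eq_vecI)

lemma diag2_one_mult_vec:
  assumes "G \<in> carrier_mat p m" "v \<in> carrier_vec m" "w \<in> carrier_vec s"
  shows "diag2 G (1\<^sub>m s) *\<^sub>v (v @\<^sub>v w) = (G *\<^sub>v v) @\<^sub>v (w :: 'a::semiring_1 vec)"
proof -
  have "diag2 G (1\<^sub>m s) = four_block_mat G (0\<^sub>m p s) (0\<^sub>m s m) (1\<^sub>m s)"
    using assms(1) by (simp add: diag2_def)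
  moreover have "four_block_mat G (0\<^sub>m p s) (0\<^sub>m s m) (1\<^sub>m s) *\<^sub>v (v @\<^sub>v w) =
      (G *\<^sub>v v + 0\<^sub>m p s *\<^sub>v w) @\<^sub>v (0\<^sub>m s m *\<^sub>v v + 1\<^sub>m s *\<^sub>v w)"
    by (rule four_block_mat_mult_vec) (use assms in auto)
  ultimately show ?thesis
    using assms by simp
qed

lemma mult_mat_vec_eq_0_iff:
  fixes U :: "'a::comm_ring_1 mat"
  assumes "U \<in> carrier_mat r c" "Uinv \<in> carrier_mat c r" "Uinv * U = 1\<^sub>m c" "w \<in> carrier_vec c"
  shows "U *\<^sub>v w = 0\<^sub>v r \<longleftrightarrow> w = 0\<^sub>v c"
proof
  assume Uw: "U *\<^sub>v w = 0\<^sub>v r"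
  have "w = (Uinv * U) *\<^sub>v w"
    using assms by simp
  also have "\<dots> = Uinv *\<^sub>v (U *\<^sub>v w)"
    using assms by (intro assoc_mult_mat_vec) auto
  finally show "w = 0\<^sub>v c"
    using assms Uw by simp
qed (use assms in auto)

lemma transpose_mult_eq_one:
  fixes X Y :: "'a::comm_semiring_1 mat"
  assumes "X \<in> carrier_mat n n" "Y \<in> carrier_mat n n" "X * Y = 1\<^sub>m n"
  shows "transpose_mat Y * transpose_mat X = 1\<^sub>m n"
  using transpose_mult[OF assms(1,2)] assms(3) by (metis transpose_one)

lemma minv_inverse:
  assumes A: "A \<in> carrier_mat n n" and det: "det A \<noteq> 0"
  shows "minv A \<in> carrier_mat n n" "A * minv A = 1\<^sub>m n" "minv A * A = 1\<^sub>m n"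
proof -
  have "A \<in> Units (ring_mat TYPE('a) n undefined)"
    by (rule det_non_zero_imp_unit[OF A det])
  then obtain B where "mat_inverse A = Some B"
    using mat_inverse(1)[OF A] by fastforce
  then show "minv A \<in> carrier_mat n n" "A * minv A = 1\<^sub>m n" "minv A * A = 1\<^sub>m n"
    using mat_inverse(2)[OF A] by (simp_all add: minv_def)
qed

definition Polys :: "'a::field rf set" where
  "Polys = range to_fract"

definition poly_vec :: "'a::field rf vec \<Rightarrow> bool" where
  "poly_vec v \<longleftrightarrow> (\<forall>i < dim_vec v. v $ i \<in> Polys)"

lemma to_fract_in_Polys [simp, intro]: "to_fract q \<in> Polys"
  unfolding Polys_def by simp

lemma Polys_0 [simp]: "0 \<in> Polys" and Polys_1 [simp]: "1 \<in> Polys"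
  using to_fract_in_Polys[of 0] to_fract_in_Polys[of 1] by simp_all

lemma Polys_add [intro]: "x \<in> Polys \<Longrightarrow> y \<in> Polys \<Longrightarrow> x + y \<in> Polys"
  unfolding Polys_def by (auto simp flip: to_fract_add)

lemma Polys_mult [intro]: "x \<in> Polys \<Longrightarrow> y \<in> Polys \<Longrightarrow> x * y \<in> Polys"
  unfolding Polys_def by (auto simp flip: to_fract_mult)

lemma Polys_minus [intro]: "x \<in> Polys \<Longrightarrow> - x \<in> Polys"
  unfolding Polys_def by (auto simp flip: to_fract_uminus)

lemma Polys_sum [intro]: "(\<And>x. x \<in> S \<Longrightarrow> f x \<in> Polys) \<Longrightarrow> sum f S \<in> Polys"
  by (induction S rule: infinite_finite_induct) auto

lemma poly_mat_iff: "poly_mat M \<longleftrightarrow> (\<forall>i < dim_row M. \<forall>j < dim_col M. M $$ (i,j) \<in> Polys)"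
  unfolding poly_mat_def Polys_def by (auto simp: image_iff)

lemma poly_mat_iff_cols: "poly_mat M \<longleftrightarrow> (\<forall>j < dim_col M. poly_vec (col M j))"
  unfolding poly_mat_iff poly_vec_def by auto

lemma poly_vec_mult_mat_vec:
  "poly_mat M \<Longrightarrow> poly_vec v \<Longrightarrow> dim_vec v = dim_col M \<Longrightarrow> poly_vec (M *\<^sub>v v)"
  unfolding poly_vec_def poly_mat_iff
  by (auto simp: mult_mat_vec_def scalar_prod_def intro!: Polys_sum Polys_mult)

lemma poly_mat_mult: "poly_mat M \<Longrightarrow> poly_mat N \<Longrightarrow> dim_col M = dim_row N \<Longrightarrow> poly_mat (M * N)"
  unfolding poly_mat_iff by (auto simp: times_mat_def scalar_prod_def intro!: Polys_sum Polys_mult)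

lemma poly_mat_uminus: "poly_mat M \<Longrightarrow> poly_mat (- M)"
  unfolding poly_mat_iff by auto

lemma poly_mat_transpose: "poly_mat M \<Longrightarrow> poly_mat (transpose_mat M)"
  unfolding poly_mat_iff by auto

lemma poly_mat_pencil: "poly_mat (pencil M1 M0)"
  unfolding poly_mat_def pencil_def by auto

lemma poly_vec_append: "poly_vec (v @\<^sub>v w) \<longleftrightarrow> poly_vec v \<and> poly_vec w"
  unfolding poly_vec_def
proof safe
  fix i assume a: "\<forall>i<dim_vec (v @\<^sub>v w). (v @\<^sub>v w) $ i \<in> Polys"
  { assume "i < dim_vec v" thus "v $ i \<in> Polys" using a[rule_format, of i] by auto }
  { assume "i < dim_vec w" thus "w $ i \<in> Polys" using a[rule_format, of "dim_vec v + i"] by auto }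
qed (auto simp: append_vec_def Let_def)

lemma poly_vec_add: "poly_vec v \<Longrightarrow> poly_vec w \<Longrightarrow> dim_vec v = dim_vec w \<Longrightarrow> poly_vec (v + w)"
  unfolding poly_vec_def by auto

lemma poly_vec_smult: "c \<in> Polys \<Longrightarrow> poly_vec v \<Longrightarrow> poly_vec (c \<cdot>\<^sub>v v)"
  unfolding poly_vec_def by auto

lemma poly_vec_zero [simp]: "poly_vec (0\<^sub>v n)"
  unfolding poly_vec_def by simp

lemma poly_vec_unit_vec [simp]: "poly_vec (unit_vec n i)"
  unfolding poly_vec_def by (simp add: unit_vec_def)

lemma poly_vec_uminus: "poly_vec v \<Longrightarrow> poly_vec (- v)"
  unfolding poly_vec_def by auto

lemma poly_vec_col: "poly_mat M \<Longrightarrow> j < dim_col M \<Longrightarrow> poly_vec (col M j)"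
  unfolding poly_mat_iff_cols by auto

lemma poly_mat_select_mat: "poly_mat (select_mat r c d)"
  by (simp add: poly_mat_iff select_mat_def of_bool_def)

lemma poly_mat_if_unimodular: "unimodular M \<Longrightarrow> poly_mat M"
  unfolding unimodular_def by simp

lemma unimodularE:
  assumes "unimodular M" "M \<in> carrier_mat n n"
  obtains W where "poly_mat W" "W \<in> carrier_mat n n" "M * W = 1\<^sub>m n" "W * M = 1\<^sub>m n"
  using assms unfolding unimodular_def by auto

lemma unimodular_transpose:
  assumes "unimodular M"
  shows "unimodular (transpose_mat M)"
proof -
  define n where "n = dim_row M"
  with assms have M: "M \<in> carrier_mat n n"
    unfolding unimodular_def by auto
  obtain W where W: "poly_mat W" "W \<in> carrier_mat n n" "M * W = 1\<^sub>m n" "W * M = 1\<^sub>m n"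
    using assms M by (rule unimodularE)
  have "transpose_mat M * transpose_mat W = 1\<^sub>m n"
    using transpose_mult_eq_one[OF W(2) M W(4)] .
  moreover have "transpose_mat W * transpose_mat M = 1\<^sub>m n"
    using transpose_mult_eq_one[OF M W(2,3)] .
  ultimately show ?thesis
    using M W assms unfolding unimodular_def
    by (auto intro!: exI[of _ "transpose_mat W"] poly_mat_transpose)
qed

lemma left_coprime_imp_right_coprime_transpose:
  assumes A: "A \<in> carrier_mat n n" and B: "B \<in> carrier_mat n q" and coprime: "left_coprime A B"
  shows "right_coprime (transpose_mat A) (transpose_mat B)"
  unfolding right_coprime_def
proof (intro allI impI, elim conjE)
  fix X A' B' assume poly: "poly_mat X" "poly_mat A'" "poly_mat B'"
    and X: "X \<in> carrier_mat (dim_col (transpose_mat A)) (dim_col (transpose_mat A))"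
    and A': "A' \<in> carrier_mat (dim_row (transpose_mat A)) (dim_col (transpose_mat A))"
    and B': "B' \<in> carrier_mat (dim_row (transpose_mat B)) (dim_col (transpose_mat A))"
    and eqs: "transpose_mat A = A' * X" "transpose_mat B = B' * X"
  have X: "X \<in> carrier_mat n n" and A': "A' \<in> carrier_mat n n" and B': "B' \<in> carrier_mat q n"
    using X A' B' A B by auto
  have "A = transpose_mat X * transpose_mat A'" "B = transpose_mat X * transpose_mat B'"
    using arg_cong[OF eqs(1), of transpose_mat] arg_cong[OF eqs(2), of transpose_mat]
      transpose_mult[OF A' X] transpose_mult[OF B' X] by simp_all
  then have "unimodular (transpose_mat X)"
    using coprime[unfolded left_coprime_def, rule_format,
        of "transpose_mat X" "transpose_mat A'" "transpose_mat B'"] poly X A' B' A B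
    by (simp add: poly_mat_transpose)
  from unimodular_transpose[OF this] show "unimodular X"
    by simp
qed

lemma right_coprime_uminus:
  assumes "right_coprime A C"
  shows "right_coprime A (- C)"
  unfolding right_coprime_def
proof (intro allI impI, elim conjE)
  fix X A' C' assume poly: "poly_mat X" "poly_mat A'" "poly_mat C'"
    and carrier: "X \<in> carrier_mat (dim_col A) (dim_col A)" "A' \<in> carrier_mat (dim_row A) (dim_col A)"
      "C' \<in> carrier_mat (dim_row (- C)) (dim_col A)"
    and eqs: "A = A' * X" "- C = C' * X"
  have "C = - C' * X"
    using arg_cong[OF eqs(2), of uminus] carrier by simp
  moreover have "- C' \<in> carrier_mat (dim_row C) (dim_col A)" "poly_mat (- C')"
    using carrier(3) poly(3) by (auto simp: poly_mat_uminus)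
  ultimately show "unimodular X"
    using assms poly(1,2) carrier(1,2) eqs(1) unfolding right_coprime_def by blast
qed

section \<open>Polynomial solutions of right coprime systems\<close>

text \<open>If \<open>A x\<close> and \<open>C x\<close> are polynomial but \<open>x\<close> is not, take a common denominator \<open>d\<close> of
  \<open>x\<close> of least degree and an irreducible factor \<open>\<pi>\<close> of \<open>d\<close>. Some entry of \<open>(d / \<pi>) x\<close> is
  not polynomial, and a Bezout relation modulo \<open>\<pi>\<close> turns \<open>d x\<close> into a polynomial vector \<open>z\<close>
  with a unit entry such that \<open>\<pi>\<close> divides \<open>A z\<close> and \<open>C z\<close>. Then \<open>divisor_mat\<close> is a common
  right factor of \<open>A\<close> and \<open>C\<close> of determinant \<open>\<pi>\<close>, which is not unimodular.\<close>

definition divisor_mat :: "nat \<Rightarrow> nat \<Rightarrow> 'a::field vec \<Rightarrow> 'a \<Rightarrow> 'a mat" where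
  "divisor_mat n i z p =
     mat n n (\<lambda>(j, l). if l = i then if j = i then p else - z $ j else of_bool (j = l))"

lemma divisor_mat_factor:
  fixes M :: "'a::field mat"
  assumes M: "M \<in> carrier_mat k n" and z: "z \<in> carrier_vec n" "i < n" "z $ i = 1" and p: "p \<noteq> 0"
  shows "M = mat k n (\<lambda>(r, l). if l = i then (M *\<^sub>v z) $ r / p else M $$ (r, l)) * divisor_mat n i z p"
    (is "M = ?R * ?X")
proof (rule eq_matI)
  fix r l assume "r < dim_row (?R * ?X)" "l < dim_col (?R * ?X)"
  hence r: "r < k" and l: "l < n" by (auto simp: divisor_mat_def)
  have split: "(\<Sum>j<n. f j) = f i + (\<Sum>j \<in> {..<n} - {i}. f j)" for f :: "nat \<Rightarrow> 'a"
    using z(2) by (simp add: sum.remove)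
  have RX: "(?R * ?X) $$ (r, l) = (\<Sum>j<n. ?R $$ (r, j) * ?X $$ (j, l))"
    using r l by (simp add: divisor_mat_def scalar_prod_def atLeast0LessThan)
  show "M $$ (r, l) = (?R * ?X) $$ (r, l)"
  proof (cases "l = i")
    case True
    have "(M *\<^sub>v z) $ r = M $$ (r, i) + (\<Sum>j \<in> {..<n} - {i}. M $$ (r, j) * z $ j)"
      using M z r by (simp add: scalar_prod_def atLeast0LessThan split[of "\<lambda>j. M $$ (r, j) * z $ j"])
    moreover have "(\<Sum>j<n. ?R $$ (r, j) * ?X $$ (j, l)) =
        (M *\<^sub>v z) $ r - (\<Sum>j \<in> {..<n} - {i}. M $$ (r, j) * z $ j)"
      using r z p True by (simp add: split divisor_mat_def sum_negf)
    ultimately show ?thesis using RX True by simp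
  next
    case False
    have "(\<Sum>j<n. ?R $$ (r, j) * ?X $$ (j, l)) = (\<Sum>j<n. if j = l then M $$ (r, l) else 0)"
      by (rule sum.cong) (use r l False in \<open>auto simp: divisor_mat_def\<close>)
    with RX l show ?thesis by simp
  qed
qed (use M in \<open>auto simp: divisor_mat_def\<close>)

lemma divisor_mat_mult_vec:
  fixes z :: "'a::field vec"
  assumes z: "z \<in> carrier_vec n" "i < n" "z $ i = 1" and p: "p \<noteq> 0"
  shows "divisor_mat n i z p *\<^sub>v (inverse p \<cdot>\<^sub>v z) = unit_vec n i"
proof (rule eq_vecI)
  fix j assume "j < dim_vec (unit_vec n i)"
  hence j: "j < n" by simp
  let ?X = "divisor_mat n i z p" and ?w = "inverse p \<cdot>\<^sub>v z"
  have "(?X *\<^sub>v ?w) $ j = (\<Sum>l<n. ?X $$ (j, l) * ?w $ l)"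
    using j z by (simp add: divisor_mat_def scalar_prod_def atLeast0LessThan)
  also have "\<dots> = ?X $$ (j, i) * ?w $ i + (\<Sum>l \<in> {..<n} - {i}. ?X $$ (j, l) * ?w $ l)"
    using z(2) by (simp add: sum.remove)
  also have "(\<Sum>l \<in> {..<n} - {i}. ?X $$ (j, l) * ?w $ l) =
      (\<Sum>l \<in> {..<n} - {i}. if l = j then ?w $ j else 0)"
    by (rule sum.cong) (use j in \<open>auto simp: divisor_mat_def\<close>)
  finally show "(?X *\<^sub>v ?w) $ j = unit_vec n i $ j"
    using j z p by (auto simp: divisor_mat_def)
qed (simp add: divisor_mat_def)

lemma degree_eq_0_if_inverse_in_Polys:
  fixes \<pi> :: "'a::field poly"
  assumes "inverse (to_fract \<pi>) \<in> Polys"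
  shows "degree \<pi> = 0"
proof (cases "\<pi> = 0")
  case False
  from assms obtain q where "inverse (to_fract \<pi>) = to_fract q"
    unfolding Polys_def by auto
  with False have "to_fract (\<pi> * q) = to_fract 1"
    by (simp add: field_simps)
  hence "is_unit \<pi>"
    by (metis dvdI to_fract_eq_iff)
  with False show ?thesis
    by (simp add: is_unit_iff_degree)
qed simp

lemma not_right_coprime_if_common_divisor:
  fixes A C :: "'a::field rf mat" and \<pi> :: "'a poly"
  assumes A: "A \<in> carrier_mat n n" "poly_mat A" and C: "C \<in> carrier_mat r n" "poly_mat C"
    and \<pi>: "0 < degree \<pi>"
    and z: "z \<in> carrier_vec n" "poly_vec z" "i < n" "z $ i = 1"
    and dvd: "poly_vec (inverse (to_fract \<pi>) \<cdot>\<^sub>v (A *\<^sub>v z))"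
      "poly_vec (inverse (to_fract \<pi>) \<cdot>\<^sub>v (C *\<^sub>v z))"
  shows "\<not> right_coprime A C"
proof
  assume coprime: "right_coprime A C"
  define p where "p = to_fract \<pi>"
  define X where "X = divisor_mat n i z p"
  have p: "p \<noteq> 0"
    using \<pi> by (auto simp: p_def)
  have X: "X \<in> carrier_mat n n" "poly_mat X"
    using z by (auto simp: X_def divisor_mat_def poly_mat_iff poly_vec_def p_def)
  have factor: "\<exists>R. R \<in> carrier_mat k n \<and> poly_mat R \<and> M = R * X"
    if M: "M \<in> carrier_mat k n" "poly_mat M" "poly_vec (inverse p \<cdot>\<^sub>v (M *\<^sub>v z))" for M k
  proof (intro exI conjI)
    let ?R = "mat k n (\<lambda>(r, l). if l = i then (M *\<^sub>v z) $ r / p else M $$ (r, l))"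
    show "M = ?R * X"
      unfolding X_def by (rule divisor_mat_factor[OF M(1) z(1,3,4) p])
    show "poly_mat ?R"
      using M by (auto simp: poly_mat_iff poly_vec_def divide_inverse mult.commute)
  qed simp
  obtain RA RC where "RA \<in> carrier_mat n n" "poly_mat RA" "A = RA * X"
    and "RC \<in> carrier_mat r n" "poly_mat RC" "C = RC * X"
    using factor[OF A] factor[OF C] dvd by (auto simp: p_def)
  with coprime A C X have "unimodular X"
    unfolding right_coprime_def by auto
  then obtain W where W: "poly_mat W" "W \<in> carrier_mat n n" "W * X = 1\<^sub>m n"
    using X(1) by (rule unimodularE)
  have "poly_vec (W *\<^sub>v unit_vec n i)"
    using W by (intro poly_vec_mult_mat_vec) auto
  also have "W *\<^sub>v unit_vec n i = W *\<^sub>v (X *\<^sub>v (inverse p \<cdot>\<^sub>v z))"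
    unfolding X_def by (simp add: divisor_mat_mult_vec[OF z(1,3,4) p])
  also have "\<dots> = inverse p \<cdot>\<^sub>v z"
    using W X z by (simp flip: assoc_mult_mat_vec)
  finally have "poly_vec (inverse p \<cdot>\<^sub>v z)" .
  hence "inverse p \<in> Polys"
    using z unfolding poly_vec_def by auto
  with \<pi> show False
    unfolding p_def by (simp add: degree_eq_0_if_inverse_in_Polys)
qed

lemma poly_bezout:
  fixes a b :: "'a::field poly"
  shows "\<exists>u v. u * a + v * b dvd a \<and> u * a + v * b dvd b"
proof (induction "degree b" arbitrary: a b rule: less_induct)
  case less
  show ?case
  proof (cases "b = 0 \<or> b dvd a")
    case True
    then show ?thesis
    proof
      assume "b = 0"
      then show ?thesis by (intro exI[of _ 1] exI[of _ 0]) simp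
    next
      assume "b dvd a"
      then show ?thesis by (intro exI[of _ 0] exI[of _ 1]) simp
    qed
  next
    case False
    define q r where "q = a div b" and "r = a mod b"
    have a: "a = q * b + r"
      by (simp add: q_def r_def)
    have "degree r < degree b"
      using False degree_mod_less' unfolding r_def by (auto simp: mod_eq_0_iff_dvd)
    from less[OF this] obtain u v where g: "u * b + v * r dvd b" "u * b + v * r dvd r"
      by blast
    have "u * b + v * r dvd a"
      using g unfolding a by (intro dvd_add dvd_mult) auto
    moreover have "u * b + v * r = v * a + (u - v * q) * b"
      by (simp add: a algebra_simps)
    ultimately show ?thesis
      using g(1) by (intro exI[of _ v] exI[of _ "u - v * q"]) simp
  qed
qed

lemma irreducible_bezout:
  fixes \<pi> y :: "'a::field poly"
  assumes "irreducible \<pi>" "\<not> \<pi> dvd y"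
  obtains u v where "u * y + v * \<pi> = 1"
proof -
  obtain u v where "u * y + v * \<pi> dvd y" "u * y + v * \<pi> dvd \<pi>"
    using poly_bezout by blast
  moreover define g where "g = u * y + v * \<pi>"
  ultimately have g: "g dvd y" "g dvd \<pi>"
    by simp_all
  then obtain c where c: "\<pi> = g * c"
    by (elim dvdE)
  have "\<not> is_unit c"
  proof
    assume "is_unit c"
    then have "\<pi> dvd g"
      unfolding c by (simp add: mult_unit_dvd_iff)
    with g(1) assms(2) show False
      using dvd_trans by blast
  qed
  with irreducibleD[OF assms(1) c] have "is_unit g"
    by blast
  then obtain w where "1 = g * w"
    by (elim dvdE)
  then show ?thesis
    using that[of "w * u" "w * v"] unfolding g_def by (simp add: algebra_simps)
qed

lemma irreducible_divisor_exists:
  fixes d :: "'a::field poly"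
  assumes "0 < degree d"
  obtains \<pi> where "irreducible \<pi>" "\<pi> dvd d"
proof -
  from ex_has_least_nat[of "\<lambda>g. g dvd d \<and> 0 < degree g" d degree] assms
  obtain \<pi> where \<pi>: "\<pi> dvd d" "0 < degree \<pi>"
    and min: "\<And>g. g dvd d \<Longrightarrow> 0 < degree g \<Longrightarrow> degree \<pi> \<le> degree g"
    by auto
  have "irreducible \<pi>"
  proof (rule irreducibleI)
    show "\<pi> \<noteq> 0"
      using \<pi>(2) by auto
    then show "\<not> is_unit \<pi>"
      using \<pi>(2) by (simp add: is_unit_iff_degree)
    fix a b assume ab: "\<pi> = a * b"
    show "is_unit a \<or> is_unit b"
    proof (rule ccontr)
      assume "\<not> (is_unit a \<or> is_unit b)"
      with ab \<open>\<pi> \<noteq> 0\<close> have "0 < degree a" "0 < degree b" "a \<noteq> 0" "b \<noteq> 0"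
        by (auto simp: is_unit_iff_degree)
      then have "degree a < degree \<pi>"
        by (simp add: ab degree_mult_eq)
      moreover have "a dvd \<pi>"
        using ab by simp
      then have "a dvd d"
        using \<pi>(1) by (rule dvd_trans)
      ultimately show False
        using min[OF _ \<open>0 < degree a\<close>] by fastforce
    qed
  qed
  with \<pi>(1) that show ?thesis by blast
qed

lemma denominator_exists: "\<exists>b. b \<noteq> 0 \<and> to_fract b * (y :: 'a::field rf) \<in> Polys"
proof (cases y)
  case (Fract a b)
  then show ?thesis
    by (intro exI[of _ b]) (simp add: Fract_conv_to_fract)
qed

lemma common_denominator_exists: "\<exists>d. d \<noteq> 0 \<and> poly_vec (to_fract d \<cdot>\<^sub>v (x :: 'a::field rf vec))"
proof -
  have "\<forall>j. \<exists>b. b \<noteq> 0 \<and> to_fract b * x $ j \<in> Polys"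
    using denominator_exists by blast
  then obtain b where b: "\<And>j. b j \<noteq> 0" "\<And>j. to_fract (b j) * x $ j \<in> Polys"
    by metis
  define d where "d = (\<Prod>j<dim_vec x. b j)"
  have "to_fract d * x $ j \<in> Polys" if "j < dim_vec x" for j
  proof -
    have "d = (\<Prod>l \<in> {..<dim_vec x} - {j}. b l) * b j"
      unfolding d_def using that by (simp add: prod.remove mult.commute)
    then have "to_fract d * x $ j =
        to_fract (\<Prod>l \<in> {..<dim_vec x} - {j}. b l) * (to_fract (b j) * x $ j)"
      by (simp add: mult.assoc)
    also have "\<dots> \<in> Polys"
      using b(2) by (rule Polys_mult[OF to_fract_in_Polys])
    finally show ?thesis .
  qed
  moreover have "d \<noteq> 0"
    unfolding d_def using b(1) by simp
  ultimately show ?thesis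
    by (auto simp: poly_vec_def)
qed

lemma not_right_coprime_if_reducible_denominator:
  fixes A C :: "'a::field rf mat" and \<pi> d :: "'a poly"
  assumes A: "A \<in> carrier_mat n n" "poly_mat A" and C: "C \<in> carrier_mat r n" "poly_mat C"
    and x: "x \<in> carrier_vec n" "poly_vec (A *\<^sub>v x)" "poly_vec (C *\<^sub>v x)"
    and \<pi>: "irreducible \<pi>" and d: "poly_vec (to_fract (\<pi> * d) \<cdot>\<^sub>v x)"
    and i: "i < n" "to_fract d * x $ i \<notin> Polys"
  shows "\<not> right_coprime A C"
proof -
  have "\<pi> \<noteq> 0" "0 < degree \<pi>"
    using \<pi> by (auto simp: irreducible_def is_unit_iff_degree)
  obtain y where y: "to_fract (\<pi> * d) * x $ i = to_fract y"
    using d x(1) i(1) unfolding poly_vec_def Polys_def by auto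
  have "\<not> \<pi> dvd y"
  proof
    assume "\<pi> dvd y"
    then obtain w where "y = \<pi> * w"
      by (elim dvdE)
    with y \<open>\<pi> \<noteq> 0\<close> have "to_fract d * x $ i = to_fract w"
      by (simp add: mult.assoc)
    with i(2) show False
      by simp
  qed
  with \<pi> obtain u v where uv: "u * y + v * \<pi> = 1"
    by (rule irreducible_bezout)
  define z where "z = to_fract (u * (\<pi> * d)) \<cdot>\<^sub>v x + to_fract (v * \<pi>) \<cdot>\<^sub>v unit_vec n i"
  have zj: "z $ j = to_fract u * (to_fract (\<pi> * d) * x $ j) + to_fract (v * \<pi>) * unit_vec n i $ j"
    if "j < n" for j
    using x(1) i(1) that by (simp add: z_def mult.assoc)
  have z: "z \<in> carrier_vec n" "poly_vec z" "z $ i = 1"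
  proof -
    show "z \<in> carrier_vec n"
      using x(1) by (simp add: z_def)
    with zj d x(1) i(1) show "poly_vec z"
      by (auto simp: poly_vec_def unit_vec_def)
    show "z $ i = 1"
      using zj[OF i(1)] i(1) y uv by (simp flip: to_fract_mult to_fract_add)
  qed
  have divides: "poly_vec (inverse (to_fract \<pi>) \<cdot>\<^sub>v (M *\<^sub>v z))"
    if M: "M \<in> carrier_mat k n" "poly_mat M" "poly_vec (M *\<^sub>v x)" for M k
  proof -
    have "M *\<^sub>v z = to_fract (u * (\<pi> * d)) \<cdot>\<^sub>v (M *\<^sub>v x) + to_fract (v * \<pi>) \<cdot>\<^sub>v col M i"
      using M(1) x(1) i(1)
      by (simp add: z_def mult_add_distrib_mat_vec mult_mat_vec mult_mat_vec_unit_vec)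
    then have "inverse (to_fract \<pi>) \<cdot>\<^sub>v (M *\<^sub>v z) =
        (inverse (to_fract \<pi>) * to_fract (u * (\<pi> * d))) \<cdot>\<^sub>v (M *\<^sub>v x) +
        (inverse (to_fract \<pi>) * to_fract (v * \<pi>)) \<cdot>\<^sub>v col M i"
      using M(1) x(1) by (intro eq_vecI) (auto simp: ring_distribs mult.assoc)
    also have "\<dots> = to_fract (u * d) \<cdot>\<^sub>v (M *\<^sub>v x) + to_fract v \<cdot>\<^sub>v col M i"
      using \<open>\<pi> \<noteq> 0\<close> by (simp add: field_simps)
    finally show ?thesis
      using M i by (auto intro!: poly_vec_add poly_vec_smult poly_vec_col)
  qed
  show ?thesis
    by (rule not_right_coprime_if_common_divisor[OF A C \<open>0 < degree \<pi>\<close> z(1,2) i(1) z(3)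
          divides[OF A x(2)] divides[OF C x(3)]])
qed

lemma poly_vec_if_right_coprime:
  fixes A C :: "'a::field rf mat"
  assumes A: "A \<in> carrier_mat n n" "poly_mat A" and C: "C \<in> carrier_mat r n" "poly_mat C"
    and coprime: "right_coprime A C"
    and x: "x \<in> carrier_vec n" "poly_vec (A *\<^sub>v x)" "poly_vec (C *\<^sub>v x)"
  shows "poly_vec x"
proof -
  obtain d0 where "d0 \<noteq> 0 \<and> poly_vec (to_fract d0 \<cdot>\<^sub>v x)"
    using common_denominator_exists by blast
  from ex_has_least_nat[of "\<lambda>d. d \<noteq> 0 \<and> poly_vec (to_fract d \<cdot>\<^sub>v x)", OF this, of degree]
  obtain d where d: "d \<noteq> 0" "poly_vec (to_fract d \<cdot>\<^sub>v x)"
    and min: "\<And>d'. d' \<noteq> 0 \<Longrightarrow> poly_vec (to_fract d' \<cdot>\<^sub>v x) \<Longrightarrow> degree d \<le> degree d'"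
    by blast
  have "degree d = 0"
  proof (rule ccontr)
    assume "degree d \<noteq> 0"
    then obtain \<pi> d' where \<pi>: "irreducible \<pi>" and d': "d = \<pi> * d'"
      using irreducible_divisor_exists by (metis dvdE gr0I)
    then have "0 < degree \<pi>" "d' \<noteq> 0"
      using d(1) by (auto simp: irreducible_def is_unit_iff_degree)
    with d' d(1) have "\<not> poly_vec (to_fract d' \<cdot>\<^sub>v x)"
      using min[of d'] by (auto simp: degree_mult_eq)
    then obtain i where "i < n" "to_fract d' * x $ i \<notin> Polys"
      using x(1) by (auto simp: poly_vec_def)
    with A C x \<pi> d(2) have "\<not> right_coprime A C"
      unfolding d' by (intro not_right_coprime_if_reducible_denominator)
    with coprime show False
      by contradiction
  qed
  then obtain c where "d = [:c:]"
    by (rule degree_eq_zeroE)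
  with d(1) have "x = to_fract [:inverse c:] \<cdot>\<^sub>v (to_fract d \<cdot>\<^sub>v x)"
    by (simp add: smult_smult_assoc flip: to_fract_mult one_pCons)
  with d(2) show ?thesis
    by (metis poly_vec_smult to_fract_in_Polys)
qed

section \<open>Polynomial bases\<close>

lemma right_poly_basis_iff:
  assumes "M \<in> carrier_mat r c" "H \<in> carrier_mat c k"
  shows "right_poly_basis M H \<longleftrightarrow> poly_mat H \<and> (\<forall>j<k. M *\<^sub>v col H j = 0\<^sub>v r) \<and>
     (\<forall>y \<in> carrier_vec k. H *\<^sub>v y = 0\<^sub>v c \<longrightarrow> y = 0\<^sub>v k) \<and>
     (\<forall>x \<in> carrier_vec c. M *\<^sub>v x = 0\<^sub>v r \<longrightarrow> (\<exists>y \<in> carrier_vec k. x = H *\<^sub>v y))"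
  using assms mult_mat_eq_0_iff_cols[OF assms] unfolding right_poly_basis_def by auto

lemma right_poly_basis_mult_left:
  assumes U: "U \<in> carrier_mat r' r" "Uinv \<in> carrier_mat r r'" "Uinv * U = 1\<^sub>m r"
    and M: "M \<in> carrier_mat r c" and H: "H \<in> carrier_mat c k"
  shows "right_poly_basis (U * M) H \<longleftrightarrow> right_poly_basis M H"
proof -
  have "(U * M) *\<^sub>v x = 0\<^sub>v r' \<longleftrightarrow> M *\<^sub>v x = 0\<^sub>v r" if "x \<in> carrier_vec c" for x
    using that U M mult_mat_vec_eq_0_iff[OF U, of "M *\<^sub>v x"] by auto
  with U M H show ?thesis
    by (simp add: right_poly_basis_iff[of _ r' c] right_poly_basis_iff[of _ r c])
qed

locale poly_kernel_iso =
  fixes L G \<Phi> \<Psi> :: "'a::field rf mat" and a b p m :: nat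
  assumes carrier: "L \<in> carrier_mat a b" "G \<in> carrier_mat p m" "\<Phi> \<in> carrier_mat b m" "\<Psi> \<in> carrier_mat m b"
    and poly_mat_\<Psi>: "poly_mat \<Psi>"
    and kernel: "\<And>z. z \<in> carrier_vec m \<Longrightarrow> L *\<^sub>v (\<Phi> *\<^sub>v z) = 0\<^sub>v a \<longleftrightarrow> G *\<^sub>v z = 0\<^sub>v p"
    and left_inverse: "\<And>z. z \<in> carrier_vec m \<Longrightarrow> G *\<^sub>v z = 0\<^sub>v p \<Longrightarrow> \<Psi> *\<^sub>v (\<Phi> *\<^sub>v z) = z"
    and right_inverse: "\<And>x. x \<in> carrier_vec b \<Longrightarrow> L *\<^sub>v x = 0\<^sub>v a \<Longrightarrow> \<Phi> *\<^sub>v (\<Psi> *\<^sub>v x) = x"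
    and poly_vec_\<Phi>: "\<And>z. z \<in> carrier_vec m \<Longrightarrow> poly_vec z \<Longrightarrow> G *\<^sub>v z = 0\<^sub>v p \<Longrightarrow> poly_vec (\<Phi> *\<^sub>v z)"
begin

lemma right_poly_basis_image:
  assumes H: "H \<in> carrier_mat m k" "right_poly_basis G H"
  shows "right_poly_basis L (\<Phi> * H)"
proof -
  have GH: "G *\<^sub>v col H j = 0\<^sub>v p" if "j < k" for j
    using H that carrier by (simp add: right_poly_basis_iff)
  have "poly_mat (\<Phi> * H)"
    unfolding poly_mat_iff_cols
  proof (intro allI impI)
    fix j assume "j < dim_col (\<Phi> * H)"
    with H carrier GH show "poly_vec (col (\<Phi> * H) j)"
      by (auto simp: right_poly_basis_iff poly_vec_col intro!: poly_vec_\<Phi>)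
  qed
  moreover have "L *\<^sub>v col (\<Phi> * H) j = 0\<^sub>v a" if "j < k" for j
    using that carrier H GH kernel by simp
  moreover have "y = 0\<^sub>v k" if y: "y \<in> carrier_vec k" "(\<Phi> * H) *\<^sub>v y = 0\<^sub>v b" for y
  proof -
    have "G *\<^sub>v (H *\<^sub>v y) = 0\<^sub>v p"
      using H carrier y(1) by (simp add: right_poly_basis_def flip: assoc_mult_mat_vec)
    then have "H *\<^sub>v y = \<Psi> *\<^sub>v ((\<Phi> * H) *\<^sub>v y)"
      using left_inverse H carrier y(1) by simp
    also have "\<dots> = 0\<^sub>v m"
      using y(2) carrier by simp
    finally show ?thesis
      using y(1) H carrier by (auto simp: right_poly_basis_iff)
  qed
  moreover have "\<exists>y \<in> carrier_vec k. x = (\<Phi> * H) *\<^sub>v y" if x: "x \<in> carrier_vec b" "L *\<^sub>v x = 0\<^sub>v a" for x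
  proof -
    have "G *\<^sub>v (\<Psi> *\<^sub>v x) = 0\<^sub>v p"
      using kernel[of "\<Psi> *\<^sub>v x"] right_inverse[OF x] x carrier by simp
    then obtain y where y: "y \<in> carrier_vec k" "\<Psi> *\<^sub>v x = H *\<^sub>v y"
      using H x carrier by (auto simp: right_poly_basis_iff)
    then have "x = (\<Phi> * H) *\<^sub>v y"
      using right_inverse[OF x] H carrier by simp
    with y show ?thesis
      by blast
  qed
  moreover have "\<Phi> * H \<in> carrier_mat b k"
    using H carrier by auto
  ultimately show ?thesis
    using right_poly_basis_iff[OF carrier(1)] by blast
qed

lemma right_poly_basis_preimage:
  assumes Hf: "Hf \<in> carrier_mat b k" "right_poly_basis L Hf"
  shows "right_poly_basis G (\<Psi> * Hf)" "Hf = \<Phi> * (\<Psi> * Hf)"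
proof -
  have \<Psi>Hf: "\<Psi> * Hf \<in> carrier_mat m k"
    using Hf carrier by auto
  have LHf: "L *\<^sub>v col Hf j = 0\<^sub>v a" if "j < k" for j
    using Hf that carrier by (simp add: right_poly_basis_iff)
  show Hf_eq: "Hf = \<Phi> * (\<Psi> * Hf)"
  proof (rule mat_col_eqI)
    fix j assume "j < dim_col (\<Phi> * (\<Psi> * Hf))"
    then have j: "j < k"
      using Hf(1) by simp
    have "col (\<Phi> * (\<Psi> * Hf)) j = \<Phi> *\<^sub>v (\<Psi> *\<^sub>v col Hf j)"
      using col_mult2[OF carrier(3) \<Psi>Hf j] col_mult2[OF carrier(4) Hf(1) j] by simp
    with Hf j LHf show "col Hf j = col (\<Phi> * (\<Psi> * Hf)) j"
      by (simp add: right_inverse)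
  qed (use Hf carrier in auto)
  have "poly_mat (\<Psi> * Hf)"
    using Hf carrier poly_mat_\<Psi> by (intro poly_mat_mult) (auto simp: right_poly_basis_def)
  moreover have "G *\<^sub>v col (\<Psi> * Hf) j = 0\<^sub>v p" if j: "j < k" for j
  proof -
    have "L *\<^sub>v (\<Phi> *\<^sub>v (\<Psi> *\<^sub>v col Hf j)) = 0\<^sub>v a"
      using right_inverse LHf[OF j] j Hf(1) by simp
    then show ?thesis
      using kernel[of "\<Psi> *\<^sub>v col Hf j"] col_mult2[OF carrier(4) Hf(1) j] carrier(4) Hf(1) j by simp
  qed
  moreover have "y = 0\<^sub>v k" if y: "y \<in> carrier_vec k" "(\<Psi> * Hf) *\<^sub>v y = 0\<^sub>v m" for y
  proof -
    have "Hf *\<^sub>v y = (\<Phi> * (\<Psi> * Hf)) *\<^sub>v y"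
      by (rule arg_cong[OF Hf_eq])
    also have "\<dots> = \<Phi> *\<^sub>v ((\<Psi> * Hf) *\<^sub>v y)"
      using carrier \<Psi>Hf y(1) by simp
    also have "\<dots> = 0\<^sub>v b"
      using y(2) carrier by simp
    finally show ?thesis
      using y(1) Hf carrier by (auto simp: right_poly_basis_iff)
  qed
  moreover have "\<exists>y \<in> carrier_vec k. z = (\<Psi> * Hf) *\<^sub>v y" if z: "z \<in> carrier_vec m" "G *\<^sub>v z = 0\<^sub>v p" for z
  proof -
    have "\<Phi> *\<^sub>v z \<in> carrier_vec b" "L *\<^sub>v (\<Phi> *\<^sub>v z) = 0\<^sub>v a"
      using z kernel carrier by auto
    then obtain y where y: "y \<in> carrier_vec k" "\<Phi> *\<^sub>v z = Hf *\<^sub>v y"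
      using Hf(2) unfolding right_poly_basis_iff[OF carrier(1) Hf(1)] by blast
    then have "z = (\<Psi> * Hf) *\<^sub>v y"
      using left_inverse[OF z] Hf carrier by simp
    with y show ?thesis
      by blast
  qed
  ultimately show "right_poly_basis G (\<Psi> * Hf)"
    using right_poly_basis_iff[OF carrier(2) \<Psi>Hf] by blast
qed

lemma right_poly_basis_transfer:
  assumes "Hf \<in> carrier_mat b k"
  shows "right_poly_basis L Hf \<longleftrightarrow> (\<exists>H. H \<in> carrier_mat m k \<and> right_poly_basis G H \<and> Hf = \<Phi> * H)"
proof
  assume "right_poly_basis L Hf"
  with assms carrier show "\<exists>H. H \<in> carrier_mat m k \<and> right_poly_basis G H \<and> Hf = \<Phi> * H"
    by (intro exI[of _ "\<Psi> * Hf"]) (auto intro: right_poly_basis_preimage)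
qed (auto intro: right_poly_basis_image)

end

lemma right_poly_basis_mult_right:
  assumes M: "M \<in> carrier_mat r c" and V: "V \<in> carrier_mat c c" "unimodular V"
    and Y: "Y \<in> carrier_mat c k"
  shows "right_poly_basis (M * V) Y \<longleftrightarrow> right_poly_basis M (V * Y)"
proof -
  obtain W where W: "poly_mat W" "W \<in> carrier_mat c c" "V * W = 1\<^sub>m c" "W * V = 1\<^sub>m c"
    using V(2,1) by (rule unimodularE)
  have WV: "W *\<^sub>v (V *\<^sub>v z) = z" and VW: "V *\<^sub>v (W *\<^sub>v z) = z" if "z \<in> carrier_vec c" for z
    using assoc_mult_mat_vec[OF W(2) V(1) that] assoc_mult_mat_vec[OF V(1) W(2) that] W(3,4) that
    by simp_all
  interpret poly_kernel_iso M "M * V" V W r c r c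
    using M V W WV VW by unfold_locales (auto intro: poly_vec_mult_mat_vec poly_mat_if_unimodular)
  have "right_poly_basis M (V * Y) \<longleftrightarrow>
      (\<exists>H. H \<in> carrier_mat c k \<and> right_poly_basis (M * V) H \<and> V * Y = V * H)"
    using V Y by (intro right_poly_basis_transfer) auto
  also have "\<dots> \<longleftrightarrow> right_poly_basis (M * V) Y"
  proof -
    have cancel: "W * (V * X) = X" if "X \<in> carrier_mat c k" for X
      using assoc_mult_mat[OF W(2) V(1) that] W(4) that by simp
    have "V * Y = V * H \<longleftrightarrow> Y = H" if "H \<in> carrier_mat c k" for H
      using cancel[OF Y] cancel[OF that] by metis
    with Y show ?thesis
      by blast
  qed
  finally show ?thesis ..
qed

lemma right_poly_basis_diag2_one:
  assumes G: "G \<in> carrier_mat p m" and Y: "Y \<in> carrier_mat (m + s) k"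
  shows "right_poly_basis (diag2 G (1\<^sub>m s)) Y \<longleftrightarrow>
    (\<exists>H. H \<in> carrier_mat m k \<and> right_poly_basis G H \<and> Y = H @\<^sub>r 0\<^sub>m s k)"
proof -
  define \<Phi> :: "'a rf mat" where "\<Phi> = 1\<^sub>m m @\<^sub>r 0\<^sub>m s m"
  have \<Phi>: "\<Phi> \<in> carrier_mat (m + s) m"
    by (simp add: \<Phi>_def)
  have \<Phi>_mult: "\<Phi> *\<^sub>v z = z @\<^sub>v 0\<^sub>v s" if "z \<in> carrier_vec m" for z
    using that by (simp add: \<Phi>_def mat_mult_append[of _ m m _ s])
  interpret poly_kernel_iso "diag2 G (1\<^sub>m s)" G \<Phi> "select_mat m (m + s) 0" "p + s" "m + s" p m
  proof
    show "diag2 G (1\<^sub>m s) \<in> carrier_mat (p + s) (m + s)"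
      using G by (simp add: diag2_def)
    fix x assume x: "x \<in> carrier_vec (m + s)" "diag2 G (1\<^sub>m s) *\<^sub>v x = 0\<^sub>v (p + s)"
    define v w where "v = vec_first x m" and "w = vec_last x s"
    have x_eq: "x = v @\<^sub>v w" and vw: "v \<in> carrier_vec m" "w \<in> carrier_vec s"
      using x(1) by (auto simp: v_def w_def)
    then have "w = 0\<^sub>v s"
      using x(2) G by (simp add: diag2_one_mult_vec append_vec_eq_0_iff)
    with x_eq vw \<Phi>_mult show "\<Phi> *\<^sub>v (select_mat m (m + s) 0 *\<^sub>v x) = x"
      by (simp add: select_mat_append)
  qed (use G \<Phi> \<Phi>_mult in \<open>auto simp: poly_mat_select_mat select_mat_append diag2_one_mult_vec
      append_vec_eq_0_iff poly_vec_append\<close>)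
  have "\<Phi> * H = H @\<^sub>r 0\<^sub>m s k" if "H \<in> carrier_mat m k" for H
    using that by (simp add: \<Phi>_def append_rows_mult[of _ m m _ s])
  with Y show ?thesis
    by (auto simp: right_poly_basis_transfer)
qed

section \<open>Polynomial bases of a minimal system matrix\<close>

lemma system_matrix_kernel_iff:
  fixes A B C D Ainv :: "'a::field mat"
  assumes A: "A \<in> carrier_mat n n" and B: "B \<in> carrier_mat n q" and C: "C \<in> carrier_mat r n"
    and D: "D \<in> carrier_mat r q"
    and Ainv: "Ainv \<in> carrier_mat n n" "A * Ainv = 1\<^sub>m n" "Ainv * A = 1\<^sub>m n"
    and x: "x1 \<in> carrier_vec n" "x2 \<in> carrier_vec q"
  shows "four_block_mat A B (- C) D *\<^sub>v (x1 @\<^sub>v x2) = 0\<^sub>v (n + r) \<longleftrightarrow>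
    x1 = - (Ainv * B) *\<^sub>v x2 \<and> (D + C * Ainv * B) *\<^sub>v x2 = 0\<^sub>v r"
proof -
  define K where "K = - (Ainv * B)"
  have K: "K \<in> carrier_mat n q"
    using Ainv B by (simp add: K_def)
  have "A * (Ainv * B) = B"
    using assoc_mult_mat[OF A Ainv(1) B] Ainv(2) B by simp
  then have "A *\<^sub>v (K *\<^sub>v x2) = - (B *\<^sub>v x2)"
    using assoc_mult_mat_vec[OF A K x(2)] A Ainv B x by (simp add: K_def)
  then have "A *\<^sub>v x1 + B *\<^sub>v x2 = 0\<^sub>v n \<longleftrightarrow> A *\<^sub>v x1 = A *\<^sub>v (K *\<^sub>v x2)"
    using A B x by (simp add: add_vec_eq_0_iff)
  also have "\<dots> \<longleftrightarrow> x1 = K *\<^sub>v x2"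
    using assoc_mult_mat_vec[OF Ainv(1) A x(1)] assoc_mult_mat_vec[OF Ainv(1) A, of "K *\<^sub>v x2"]
      Ainv(3) K x
    by (metis mult_mat_vec_carrier one_mult_mat_vec)
  finally have first: "A *\<^sub>v x1 + B *\<^sub>v x2 = 0\<^sub>v n \<longleftrightarrow> x1 = K *\<^sub>v x2" .
  have "- C * K + D = D + C * Ainv * B"
    using comm_add_mat[OF _ D, of "C * (Ainv * B)"] A Ainv B C by (simp add: K_def)
  then have second: "- C *\<^sub>v x1 + D *\<^sub>v x2 = (D + C * Ainv * B) *\<^sub>v x2" if "x1 = K *\<^sub>v x2"
    using assoc_mult_mat_vec[OF _ K x(2), of "- C" r] add_mult_distrib_mat_vec[of "- C * K" r q D x2]
      C D K x
    unfolding that by simp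
  have "four_block_mat A B (- C) D *\<^sub>v (x1 @\<^sub>v x2) = (A *\<^sub>v x1 + B *\<^sub>v x2) @\<^sub>v (- C *\<^sub>v x1 + D *\<^sub>v x2)"
    using A B C D x by (intro four_block_mat_mult_vec) auto
  also have "\<dots> = 0\<^sub>v (n + r) \<longleftrightarrow> A *\<^sub>v x1 + B *\<^sub>v x2 = 0\<^sub>v n \<and> - C *\<^sub>v x1 + D *\<^sub>v x2 = 0\<^sub>v r"
    by (rule append_vec_eq_0_iff) (use A B C D x in auto)
  finally show ?thesis
    using first second unfolding K_def by metis
qed

lemma right_poly_basis_system_matrix:
  fixes A B C D Ainv :: "'a::field rf mat"
  assumes A: "A \<in> carrier_mat n n" "poly_mat A" and B: "B \<in> carrier_mat n q" "poly_mat B"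
    and C: "C \<in> carrier_mat r n" "poly_mat C" and D: "D \<in> carrier_mat r q" "poly_mat D"
    and coprime: "right_coprime A C"
    and Ainv: "Ainv \<in> carrier_mat n n" "A * Ainv = 1\<^sub>m n" "Ainv * A = 1\<^sub>m n"
    and H: "H1 \<in> carrier_mat n k" "H2 \<in> carrier_mat q k"
  shows "right_poly_basis (four_block_mat A B (- C) D) (H1 @\<^sub>r H2) \<longleftrightarrow>
    right_poly_basis (D + C * Ainv * B) H2 \<and> H1 = - (Ainv * B) * H2"
proof -
  define L where "L = four_block_mat A B (- C) D"
  define K where "K = - (Ainv * B)"
  define T where "T = D + C * Ainv * B"
  have K: "K \<in> carrier_mat n q" and T: "T \<in> carrier_mat r q" and L: "L \<in> carrier_mat (n + r) (n + q)"
    using A B C D Ainv by (auto simp: K_def T_def L_def)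
  note kernel = system_matrix_kernel_iff[OF A(1) B(1) C(1) D(1) Ainv, folded L_def K_def T_def]
  have \<Phi>_mult: "(K @\<^sub>r 1\<^sub>m q) *\<^sub>v z = (K *\<^sub>v z) @\<^sub>v z" if "z \<in> carrier_vec q" for z
    using mat_mult_append[OF K one_carrier_mat that] that by simp
  interpret poly_kernel_iso L T "K @\<^sub>r 1\<^sub>m q" "select_mat q (n + q) n" "n + r" "n + q" r q
  proof
    fix x assume x: "x \<in> carrier_vec (n + q)" "L *\<^sub>v x = 0\<^sub>v (n + r)"
    define x1 x2 where "x1 = vec_first x n" and "x2 = vec_last x q"
    have "x = x1 @\<^sub>v x2" "x1 \<in> carrier_vec n" "x2 \<in> carrier_vec q"
      using x(1) by (auto simp: x1_def x2_def)
    with x(2) kernel \<Phi>_mult show "(K @\<^sub>r 1\<^sub>m q) *\<^sub>v (select_mat q (n + q) n *\<^sub>v x) = x"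
      by (simp add: select_mat_append)
  next
    fix z assume z: "z \<in> carrier_vec q" "poly_vec z" "T *\<^sub>v z = 0\<^sub>v r"
    have "(A *\<^sub>v (K *\<^sub>v z) + B *\<^sub>v z) @\<^sub>v (- C *\<^sub>v (K *\<^sub>v z) + D *\<^sub>v z) = 0\<^sub>v (n + r)"
      using kernel[of "K *\<^sub>v z" z] z K A B C D unfolding L_def by (simp add: four_block_mat_mult_vec)
    then have "A *\<^sub>v (K *\<^sub>v z) = - (B *\<^sub>v z)" "C *\<^sub>v (K *\<^sub>v z) = D *\<^sub>v z"
      using z K A B C D by (simp_all add: append_vec_eq_0_iff add_vec_eq_0_iff)
    with B D z have "poly_vec (A *\<^sub>v (K *\<^sub>v z))" "poly_vec (C *\<^sub>v (K *\<^sub>v z))"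
      by (simp_all add: poly_vec_uminus poly_vec_mult_mat_vec)
    then have "poly_vec (K *\<^sub>v z)"
      using poly_vec_if_right_coprime[OF A C coprime, of "K *\<^sub>v z"] K z(1) by simp
    with z \<Phi>_mult show "poly_vec ((K @\<^sub>r 1\<^sub>m q) *\<^sub>v z)"
      by (simp add: poly_vec_append)
  qed (use L K T kernel \<Phi>_mult in \<open>auto simp: poly_mat_select_mat select_mat_append\<close>)
  have "right_poly_basis L (H1 @\<^sub>r H2) \<longleftrightarrow>
      (\<exists>H. H \<in> carrier_mat q k \<and> right_poly_basis T H \<and> H1 @\<^sub>r H2 = (K @\<^sub>r 1\<^sub>m q) * H)"
    using H by (intro right_poly_basis_transfer) auto
  also have "\<dots> \<longleftrightarrow> right_poly_basis T H2 \<and> H1 = K * H2"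
  proof -
    have "H1 @\<^sub>r H2 = (K @\<^sub>r 1\<^sub>m q) * H \<longleftrightarrow> H1 = K * H \<and> H2 = H" if "H \<in> carrier_mat q k" for H
      using append_rows_mult[OF K one_carrier_mat that] append_rows_eq_iff[OF H(1) _ H(2) that] K that
      by simp
    with H show ?thesis
      by blast
  qed
  finally show ?thesis
    unfolding L_def K_def T_def .
qed

lemma right_poly_basis_system_matrix_diag2:
  fixes A B C D Ainv G U V :: "'a::field rf mat"
  assumes A: "A \<in> carrier_mat n n" "poly_mat A" and B: "B \<in> carrier_mat n (m + s)" "poly_mat B"
    and C: "C \<in> carrier_mat (p + s) n" "poly_mat C" and D: "D \<in> carrier_mat (p + s) (m + s)" "poly_mat D"
    and coprime: "right_coprime A C"
    and Ainv: "Ainv \<in> carrier_mat n n" "A * Ainv = 1\<^sub>m n" "Ainv * A = 1\<^sub>m n"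
    and G: "G \<in> carrier_mat p m"
    and U: "U \<in> carrier_mat (p + s) (p + s)" "unimodular U"
    and V: "V \<in> carrier_mat (m + s) (m + s)" "unimodular V"
    and UV: "U * (D + C * Ainv * B) * V = diag2 G (1\<^sub>m s)"
    and H: "H1 \<in> carrier_mat n k" "H2 \<in> carrier_mat (m + s) k"
  shows "right_poly_basis (four_block_mat A B (- C) D) (H1 @\<^sub>r H2) \<longleftrightarrow>
    (\<exists>H. H \<in> carrier_mat m k \<and> right_poly_basis G H \<and> H2 = V * (H @\<^sub>r 0\<^sub>m s k)) \<and>
    H1 = - (Ainv * B) * H2"
proof -
  define T where "T = D + C * Ainv * B"
  have T: "T \<in> carrier_mat (p + s) (m + s)"
    using B C D Ainv by (simp add: T_def)
  obtain Uinv where Uinv: "Uinv \<in> carrier_mat (p + s) (p + s)" "Uinv * U = 1\<^sub>m (p + s)"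
    using U(2,1) by (rule unimodularE)
  obtain W where W: "W \<in> carrier_mat (m + s) (m + s)" "V * W = 1\<^sub>m (m + s)" "W * V = 1\<^sub>m (m + s)"
    using V(2,1) by (rule unimodularE)
  have VW: "V * (W * X) = X" and WV: "W * (V * X) = X" if "X \<in> carrier_mat (m + s) k" for X
    using assoc_mult_mat[OF V(1) W(1) that] assoc_mult_mat[OF W(1) V(1) that] W that by simp_all
  have "right_poly_basis T H2 \<longleftrightarrow> right_poly_basis (U * T) H2"
    using right_poly_basis_mult_left[OF U(1) Uinv T H(2)] ..
  also have "\<dots> \<longleftrightarrow> right_poly_basis (U * T * V) (W * H2)"
    using right_poly_basis_mult_right[of "U * T" "p + s" "m + s" V "W * H2" k] U(1) T V W(1) H(2) VW
    by simp
  also have "\<dots> \<longleftrightarrow> (\<exists>H. H \<in> carrier_mat m k \<and> right_poly_basis G H \<and> W * H2 = H @\<^sub>r 0\<^sub>m s k)"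
    unfolding UV[folded T_def] using G W(1) H(2) by (intro right_poly_basis_diag2_one) auto
  also have "\<dots> \<longleftrightarrow> (\<exists>H. H \<in> carrier_mat m k \<and> right_poly_basis G H \<and> H2 = V * (H @\<^sub>r 0\<^sub>m s k))"
    using VW[OF H(2)] WV H(2) by (metis carrier_append_rows zero_carrier_mat)
  finally show ?thesis
    using right_poly_basis_system_matrix[OF A B C D coprime Ainv H] by (simp add: T_def)
qed

lemma left_poly_basis_system_matrix_diag2:
  fixes A B C D Ainv G U V :: "'a::field rf mat"
  assumes A: "A \<in> carrier_mat n n" "poly_mat A" and B: "B \<in> carrier_mat n (m + s)" "poly_mat B"
    and C: "C \<in> carrier_mat (p + s) n" "poly_mat C" and D: "D \<in> carrier_mat (p + s) (m + s)" "poly_mat D"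
    and coprime: "left_coprime A B"
    and Ainv: "Ainv \<in> carrier_mat n n" "A * Ainv = 1\<^sub>m n" "Ainv * A = 1\<^sub>m n"
    and G: "G \<in> carrier_mat p m"
    and U: "U \<in> carrier_mat (p + s) (p + s)" "unimodular U"
    and V: "V \<in> carrier_mat (m + s) (m + s)" "unimodular V"
    and UV: "U * (D + C * Ainv * B) * V = diag2 G (1\<^sub>m s)"
    and H: "H1 \<in> carrier_mat n k" "H2 \<in> carrier_mat (p + s) k"
  shows "left_poly_basis (four_block_mat A B (- C) D) (H1 @\<^sub>r H2) \<longleftrightarrow>
    (\<exists>H. H \<in> carrier_mat p k \<and> left_poly_basis G H \<and> H2 = transpose_mat U * (H @\<^sub>r 0\<^sub>m s k)) \<and>
    H1 = transpose_mat (C * Ainv) * H2"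
proof -
  have transpose_system: "transpose_mat (four_block_mat A B (- C) D) =
      four_block_mat (transpose_mat A) (- transpose_mat C) (- (- transpose_mat B)) (transpose_mat D)"
    using transpose_four_block_mat[OF A(1) B(1) _ D(1), of "- C"] C(1) by (simp add: transpose_uminus)
  have transpose_transfer: "transpose_mat (D + C * Ainv * B) =
      transpose_mat D + - transpose_mat B * transpose_mat Ainv * - transpose_mat C"
    using transpose_add[OF D(1), of "C * Ainv * B"] transpose_mult[OF _ B(1), of "C * Ainv" "p + s"]
      transpose_mult[OF C(1) Ainv(1)] A B C D Ainv by simp
  have "transpose_mat V * transpose_mat (D + C * Ainv * B) * transpose_mat U =
      transpose_mat (U * (D + C * Ainv * B) * V)"
    using transpose_mult[OF _ V(1), of "U * (D + C * Ainv * B)" "p + s"]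
      transpose_mult[OF U(1), of "D + C * Ainv * B" "m + s"] B C D Ainv U V
      assoc_mult_mat[of "transpose_mat V" "m + s" "m + s" "transpose_mat (D + C * Ainv * B)" "p + s"
        "transpose_mat U" "p + s"]
    by simp
  also have "\<dots> = diag2 (transpose_mat G) (1\<^sub>m s)"
    using UV transpose_four_block_mat[of G p m "0\<^sub>m p s" s "0\<^sub>m s m" s "1\<^sub>m s"] G by (simp add: diag2_def)
  finally have UV_transpose: "transpose_mat V *
      (transpose_mat D + - transpose_mat B * transpose_mat Ainv * - transpose_mat C) * transpose_mat U =
      diag2 (transpose_mat G) (1\<^sub>m s)"
    unfolding transpose_transfer .
  have "right_coprime (transpose_mat A) (- transpose_mat B)"
    using left_coprime_imp_right_coprime_transpose[OF A(1) B(1) coprime] by (rule right_coprime_uminus)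
  moreover have "transpose_mat Ainv \<in> carrier_mat n n" "transpose_mat A * transpose_mat Ainv = 1\<^sub>m n"
      "transpose_mat Ainv * transpose_mat A = 1\<^sub>m n"
    using transpose_mult_eq_one[OF Ainv(1) A(1) Ainv(3)] transpose_mult_eq_one[OF A(1) Ainv(1,2)]
      Ainv(1)
    by auto
  moreover have "- (transpose_mat Ainv * - transpose_mat C) = transpose_mat (C * Ainv)"
    using transpose_mult[OF C(1) Ainv(1)] C Ainv by simp
  ultimately show ?thesis
    using right_poly_basis_system_matrix_diag2[of "transpose_mat A" n "- transpose_mat C" p s
        "- transpose_mat B" m "transpose_mat D" "transpose_mat Ainv" "transpose_mat G"
        "transpose_mat V" "transpose_mat U" H1 k H2]
      A B C D G U V H UV_transpose
    by (simp add: left_poly_basis_def transpose_system poly_mat_transpose poly_mat_uminus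
        unimodular_transpose)
qed

theorem theorem4p3:
  fixes G :: "'a::field rf mat"
    and A1 A0 B1 B0 C1 C0 D1 D0 :: "'a mat"
    and U V :: "'a rf mat"
    and n p m s :: nat
  assumes G: "G \<in> carrier_mat p m"
    and A: "A1 \<in> carrier_mat n n" "A0 \<in> carrier_mat n n"
    and B: "B1 \<in> carrier_mat n (m + s)" "B0 \<in> carrier_mat n (m + s)"
    and C: "C1 \<in> carrier_mat (p + s) n" "C0 \<in> carrier_mat (p + s) n"
    and D: "D1 \<in> carrier_mat (p + s) (m + s)" "D0 \<in> carrier_mat (p + s) (m + s)"
    and lin: "linearization G A1 A0 B1 B0 C1 C0 D1 D0"
    and U: "U \<in> carrier_mat (p + s) (p + s)" "unimodular U"
    and V: "V \<in> carrier_mat (m + s) (m + s)" "unimodular V"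
    and UV: "U * transfer (pencil A1 A0) (pencil B1 B0) (pencil C1 C0) (pencil D1 D0) * V
             = diag2 G (1\<^sub>m s)"
  shows
   "(\<forall>k H1 H2. H1 \<in> carrier_mat n k \<longrightarrow> H2 \<in> carrier_mat (m + s) k \<longrightarrow>
      (right_poly_basis (four_block_mat (pencil A1 A0) (pencil B1 B0) (- pencil C1 C0) (pencil D1 D0))
                        (H1 @\<^sub>r H2)
       \<longleftrightarrow> (\<exists>H. H \<in> carrier_mat m k \<and> right_poly_basis G H \<and> H2 = V * (H @\<^sub>r 0\<^sub>m s k)) \<and>
           H1 = - (minv (pencil A1 A0) * pencil B1 B0) * H2))
    \<and>
    (\<forall>k H1 H2. H1 \<in> carrier_mat n k \<longrightarrow> H2 \<in> carrier_mat (p + s) k \<longrightarrow>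
      (left_poly_basis (four_block_mat (pencil A1 A0) (pencil B1 B0) (- pencil C1 C0) (pencil D1 D0))
                       (H1 @\<^sub>r H2)
       \<longleftrightarrow> (\<exists>H. H \<in> carrier_mat p k \<and> left_poly_basis G H \<and> H2 = transpose_mat U * (H @\<^sub>r 0\<^sub>m s k)) \<and>
           H1 = transpose_mat (pencil C1 C0 * minv (pencil A1 A0)) * H2))"
proof -
  have pencils: "pencil A1 A0 \<in> carrier_mat n n" "pencil B1 B0 \<in> carrier_mat n (m + s)"
    "pencil C1 C0 \<in> carrier_mat (p + s) n" "pencil D1 D0 \<in> carrier_mat (p + s) (m + s)"
    using A B C D by (simp_all add: pencil_def)
  from lin have "det (pencil A1 A0) \<noteq> 0" and coprime: "left_coprime (pencil A1 A0) (pencil B1 B0)"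
    "right_coprime (pencil A1 A0) (pencil C1 C0)"
    unfolding linearization_def minimal_psm_def by auto
  note inverse = minv_inverse[OF pencils(1) this(1)]
  note UV' = UV[unfolded transfer_def]
  note system = pencils(1) poly_mat_pencil pencils(2) poly_mat_pencil
    pencils(3) poly_mat_pencil pencils(4) poly_mat_pencil
  show ?thesis
    using right_poly_basis_system_matrix_diag2[OF system coprime(2) inverse G U V UV']
      left_poly_basis_system_matrix_diag2[OF system coprime(1) inverse G U V UV']
    by simp
qed

end
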